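(* Let $G$ be a graph of order $n\geq 3$, and let $u$ and $v$ be non-adjacent vertices of $G$. Then $$C(G+uv)\leq C(G)+\left(1-\frac{2}{n}+\frac{4}{n(n-1)}\right),$$ with equality if and only if $G$ is the complete bipartite graph $K_{2,n-2}$ and $u$ and $v$ are the two vertices of degree $n-2$ in $G$.
   Context: All graphs are finite and simple; $G+uv$ denotes the graph obtained from $G$ by adding the edge $uv$. For a vertex $w$ of a graph $G$, $N_G(w)$ is its neighborhood, $d_G(w)$ its degree, and $m(G[N_G(w)])$ the number of edges of the subgraph induced by $N_G(w)$. The clustering coefficient of $w$ in $G$ is $C_w(G)=m(G[N_G(w)])/\binom{d_G(w)}{2}$ if $d_G(w)\geq 2$, and $C_w(G)=0$ otherwise. The clustering coefficient of $G$ is $C(G)=\frac{1}{n(G)}\sum_{w\in V(G)}C_w(G)$, where $n(G)$ is the order of $G$. *)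

theory Defs
  imports Complex_Main
begin

definition simple_graph :: "'a set \<Rightarrow> ('a \<Rightarrow> 'a \<Rightarrow> bool) \<Rightarrow> bool" where
  "simple_graph V E \<longleftrightarrow> finite V \<and> (\<forall>x y. E x y \<longrightarrow> x \<in> V \<and> y \<in> V)
     \<and> (\<forall>x y. E x y \<longrightarrow> E y x) \<and> (\<forall>x. \<not> E x x)"

definition add_edge :: "('a \<Rightarrow> 'a \<Rightarrow> bool) \<Rightarrow> 'a \<Rightarrow> 'a \<Rightarrow> ('a \<Rightarrow> 'a \<Rightarrow> bool)" where
  "add_edge E u v = (\<lambda>x y. E x y \<or> (x = u \<and> y = v) \<or> (x = v \<and> y = u))"

definition nbhd :: "'a set \<Rightarrow> ('a \<Rightarrow> 'a \<Rightarrow> bool) \<Rightarrow> 'a \<Rightarrow> 'a set" where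
  "nbhd V E w = {x \<in> V. E w x}"

definition degree :: "'a set \<Rightarrow> ('a \<Rightarrow> 'a \<Rightarrow> bool) \<Rightarrow> 'a \<Rightarrow> nat" where
  "degree V E w = card (nbhd V E w)"

definition induced_edges :: "('a \<Rightarrow> 'a \<Rightarrow> bool) \<Rightarrow> 'a set \<Rightarrow> nat" where
  "induced_edges E S = card {e. \<exists>x y. e = {x, y} \<and> x \<in> S \<and> y \<in> S \<and> E x y}"

definition local_cc :: "'a set \<Rightarrow> ('a \<Rightarrow> 'a \<Rightarrow> bool) \<Rightarrow> 'a \<Rightarrow> real" where
  "local_cc V E w =
     (if degree V E w \<ge> 2
      then real (induced_edges E (nbhd V E w)) / real (degree V E w choose 2)
      else 0)"

definition cc :: "'a set \<Rightarrow> ('a \<Rightarrow> 'a \<Rightarrow> bool) \<Rightarrow> real" where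
  "cc V E = (\<Sum>w\<in>V. local_cc V E w) / real (card V)"

text \<open>G is (isomorphic to) the complete bipartite graph K_{2,n-2}, n = |V|.\<close>
definition is_K2_rest :: "'a set \<Rightarrow> ('a \<Rightarrow> 'a \<Rightarrow> bool) \<Rightarrow> bool" where
  "is_K2_rest V E \<longleftrightarrow> (\<exists>A B. A \<inter> B = {} \<and> A \<union> B = V \<and> card A = 2 \<and> card B = card V - 2
     \<and> (\<forall>x\<in>V. \<forall>y\<in>V. E x y \<longleftrightarrow> (x \<in> A \<and> y \<in> B) \<or> (x \<in> B \<and> y \<in> A)))"

end

theory Submission
  imports Defs
begin

text \<open>Adding \<open>uv\<close> changes only the local coefficients of \<open>u\<close>, \<open>v\<close> and of the common
neighbours of \<open>u\<close> and \<open>v\<close>. A common neighbour \<open>w\<close> gains \<open>1 / (d(w) choose 2) \<le> 1\<close>;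
the endpoint \<open>u\<close>, of degree \<open>d \<ge> k\<close> where \<open>k\<close> is the number of common neighbours, gains at
most \<open>k / (d + 1 choose 2) \<le> 2 / (k + 1)\<close>, and likewise \<open>v\<close>. Hence \<open>n\<close> times the increase of
the clustering coefficient is at most \<open>k + 4 / (k + 1)\<close>, which is increasing for \<open>k \<ge> 1\<close>, and
\<open>k \<le> n - 2\<close> gives the bound. Equality forces \<open>k = n - 2\<close>, \<open>d(u) = d(v) = k\<close> and all
common neighbours of degree 2, i.e. \<open>G\<close> is \<open>K_{2,n-2}\<close> with parts \<open>{u, v}\<close> and the rest.\<close>

lemma real_choose_two: "real (n choose 2) = real n * (real n - 1) / 2"
proof (induction n)
  case (Suc n)
  have "Suc n choose 2 = (n choose 2) + n"
    using binomial_Suc_Suc[of n 1] by (simp only: Suc_1 choose_one add.commute)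
  then show ?case using Suc by (simp add: field_simps)
qed simp

lemma inverse_choose_two_le_one:
  assumes "2 \<le> d"
  shows "1 / real (d choose 2) \<le> 1" and "d \<noteq> 2 \<Longrightarrow> 1 / real (d choose 2) < 1"
proof -
  have "2 * 1 \<le> real d * (real d - 1)" using assms by (intro mult_mono) auto
  then show "1 / real (d choose 2) \<le> 1" unfolding real_choose_two by simp
  assume "d \<noteq> 2"
  then have "3 * 2 \<le> real d * (real d - 1)" using assms by (intro mult_mono) auto
  then show "1 / real (d choose 2) < 1" unfolding real_choose_two by simp
qed

lemma plus_four_div_succ_le:
  fixes x y :: real
  assumes "1 \<le> x" "x \<le> y"
  shows "x + 4 / (x + 1) \<le> y + 4 / (y + 1)"
    and "x < y \<Longrightarrow> x + 4 / (x + 1) < y + 4 / (y + 1)"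
proof -
  have diff: "y + 4 / (y + 1) - (x + 4 / (x + 1)) = (y - x) * ((x + 1) * (y + 1) - 4) / ((x + 1) * (y + 1))"
    using assms by (simp add: field_simps)
  have "2 * 2 \<le> (x + 1) * (y + 1)" using assms by (intro mult_mono) auto
  then show "x + 4 / (x + 1) \<le> y + 4 / (y + 1)"
    using diff assms by (smt (verit) divide_nonneg_pos mult_nonneg_nonneg)
  assume "x < y"
  then have "2 * 2 < (x + 1) * (y + 1)" using assms by (intro mult_le_less_imp_less) auto
  then show "x + 4 / (x + 1) < y + 4 / (y + 1)"
    using diff assms \<open>x < y\<close> by (smt (verit) divide_pos_pos mult_pos_pos)
qed

text \<open>The change of the local clustering coefficient of a vertex of degree \<open>d\<close> whose
neighbourhood spans \<open>m\<close> edges, when it gets a new neighbour adjacent to \<open>k\<close> of the old ones.\<close>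

definition endpoint_gain :: "nat \<Rightarrow> nat \<Rightarrow> nat \<Rightarrow> real" where
  "endpoint_gain d m k = real (m + k) / real (Suc d choose 2) - real m / real (d choose 2)"

lemma endpoint_gain_le:
  assumes "m \<le> d choose 2"
  shows "endpoint_gain d m k \<le> real k / real (Suc d choose 2)"
proof -
  have "real m / real (Suc d choose 2) \<le> real m / real (d choose 2)"
  proof (cases "d choose 2 = 0")
    case True
    with assms show ?thesis by simp
  next
    case False
    have "real (Suc d choose 2) = real (d choose 2) + real d"
      by (simp add: real_choose_two field_simps)
    with False show ?thesis by (intro divide_left_mono) auto
  qed
  then show ?thesis unfolding endpoint_gain_def by (simp add: add_divide_distrib)
qed

lemma endpoint_gain_le_two_div:
  assumes "m \<le> d choose 2" "1 \<le> k" "k \<le> d"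
  shows "endpoint_gain d m k \<le> 2 / (real k + 1)"
    and "endpoint_gain d m k = 2 / (real k + 1) \<Longrightarrow> d = k"
proof -
  have "real k / real (Suc d choose 2) = 2 * real k / (real d * (real d + 1))"
    by (simp add: real_choose_two algebra_simps)
  also have "\<dots> \<le> 2 * real d / (real d * (real d + 1))"
    using assms by (intro divide_right_mono) auto
  also have "\<dots> = 2 / (real d + 1)" using assms by simp
  finally have le_d: "endpoint_gain d m k \<le> 2 / (real d + 1)"
    using endpoint_gain_le[OF assms(1), of k] by linarith
  have "2 / (real d + 1) \<le> 2 / (real k + 1)" using assms by (simp add: frac_le)
  with le_d show "endpoint_gain d m k \<le> 2 / (real k + 1)" by linarith
  assume eq: "endpoint_gain d m k = 2 / (real k + 1)"
  show "d = k"
  proof (rule ccontr)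
    assume "d \<noteq> k"
    then have "2 / (real d + 1) < 2 / (real k + 1)" using assms by (simp add: field_simps)
    with le_d eq show False by linarith
  qed
qed

lemma endpoint_gain_empty_nbhd:
  assumes "1 \<le> k"
  shows "endpoint_gain k 0 k = 2 / (real k + 1)"
proof -
  have "real (Suc k choose 2) = real k * (real k + 1) / 2" by (simp add: real_choose_two)
  then show ?thesis using assms by (simp add: endpoint_gain_def field_simps)
qed

lemma local_cc_eq_div:
  "local_cc V E w = real (induced_edges E (nbhd V E w)) / real (degree V E w choose 2)"
  unfolding local_cc_def by (auto simp: binomial_eq_0)

definition edges_within :: "('a \<Rightarrow> 'a \<Rightarrow> bool) \<Rightarrow> 'a set \<Rightarrow> 'a set set" where
  "edges_within E S = {e. \<exists>x y. e = {x, y} \<and> x \<in> S \<and> y \<in> S \<and> E x y}"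

lemma induced_edges_eq_card: "induced_edges E S = card (edges_within E S)"
  by (simp add: induced_edges_def edges_within_def)

lemma finite_edges_within: "finite S \<Longrightarrow> finite (edges_within E S)"
  by (rule finite_subset[of _ "Pow S"]) (auto simp: edges_within_def)

lemma induced_edges_le_choose_two:
  assumes "finite S" "\<And>x. \<not> E x x"
  shows "induced_edges E S \<le> card S choose 2"
proof -
  have "edges_within E S \<subseteq> {T. T \<subseteq> S \<and> card T = 2}"
    using assms(2) by (auto simp: edges_within_def) (metis card_2_iff)
  then have "card (edges_within E S) \<le> card {T. T \<subseteq> S \<and> card T = 2}"
    by (rule card_mono[rotated]) (use assms(1) in simp)
  then show ?thesis by (simp add: induced_edges_eq_card n_subsets[OF assms(1)])
qed

lemma edges_within_add_edge_outside:
  "\<not> (u \<in> S \<and> v \<in> S) \<Longrightarrow> edges_within (add_edge E u v) S = edges_within E S"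
  unfolding edges_within_def add_edge_def by blast

lemma induced_edges_add_edge_inside:
  assumes "finite S" "u \<in> S" "v \<in> S" "u \<noteq> v" "\<not> E u v" "\<not> E v u"
  shows "induced_edges (add_edge E u v) S = Suc (induced_edges E S)"
proof -
  have "edges_within (add_edge E u v) S = insert {u, v} (edges_within E S)"
    using assms unfolding edges_within_def add_edge_def by blast
  moreover have "{u, v} \<notin> edges_within E S"
    using assms by (auto simp: edges_within_def doubleton_eq_iff)
  ultimately show ?thesis
    using finite_edges_within[OF assms(1)] by (simp add: induced_edges_eq_card)
qed

lemma induced_edges_insert:
  assumes "finite S" "v \<notin> S" "\<And>x y. E x y \<Longrightarrow> E y x" "\<not> E v v"
  shows "induced_edges E (insert v S) = induced_edges E S + card {x \<in> S. E v x}"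
proof -
  have "edges_within E (insert v S) = edges_within E S \<union> (\<lambda>x. {v, x}) ` {x \<in> S. E v x}"
    using assms(3,4) unfolding edges_within_def by (auto 4 3)
  moreover have "edges_within E S \<inter> (\<lambda>x. {v, x}) ` {x \<in> S. E v x} = {}"
    using assms(2) by (auto simp: edges_within_def doubleton_eq_iff)
  moreover have "inj_on (\<lambda>x. {v, x}) {x \<in> S. E v x}"
    using assms(2) by (auto simp: inj_on_def doubleton_eq_iff)
  ultimately show ?thesis
    using assms(1) finite_edges_within[OF assms(1)]
    by (simp add: induced_edges_eq_card card_Un_disjoint card_image)
qed

lemma finite_nbhd: "finite V \<Longrightarrow> finite (nbhd V E w)"
  unfolding nbhd_def by simp

lemma nbhd_add_edge_other: "w \<noteq> u \<Longrightarrow> w \<noteq> v \<Longrightarrow> nbhd V (add_edge E u v) w = nbhd V E w"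
  unfolding nbhd_def add_edge_def by auto

lemma nbhd_add_edge_endpoint:
  "v \<in> V \<Longrightarrow> u \<noteq> v \<Longrightarrow> nbhd V (add_edge E u v) u = insert v (nbhd V E u)"
  unfolding nbhd_def add_edge_def by auto

lemma add_edge_commute: "add_edge E v u = add_edge E u v"
  unfolding add_edge_def by (intro ext) auto

locale nonadjacent_pair =
  fixes V :: "'a set" and E :: "'a \<Rightarrow> 'a \<Rightarrow> bool" and u v :: 'a
  assumes simple: "simple_graph V E"
    and u_in: "u \<in> V" and v_in: "v \<in> V" and u_neq_v: "u \<noteq> v" and not_adj: "\<not> E u v"
begin

abbreviation common :: "'a set" where "common \<equiv> nbhd V E u \<inter> nbhd V E v"
abbreviation rest :: "'a set" where "rest \<equiv> V - {u, v}"
abbreviation max_gain :: real where "max_gain \<equiv> real (card V) - 2 + 4 / (real (card V) - 1)"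

lemma finite_V: "finite V"
  and adj_in: "E x y \<Longrightarrow> x \<in> V" "E x y \<Longrightarrow> y \<in> V"
  and adj_sym: "E x y \<Longrightarrow> E y x"
  and irrefl: "\<not> E x x"
  using simple unfolding simple_graph_def by blast+

lemma not_adj_vu: "\<not> E v u"
  using not_adj adj_sym by blast

lemma swap: "nonadjacent_pair V E v u"
  using u_in v_in u_neq_v not_adj adj_sym by unfold_locales (auto intro: simple)

lemma card_rest: "card rest = card V - 2"
  using finite_V u_in v_in u_neq_v by (simp add: card_Diff_subset)

lemma common_subset_rest: "common \<subseteq> rest"
  unfolding nbhd_def using irrefl by auto

lemma degree_common_ge_two:
  assumes "w \<in> common"
  shows "2 \<le> degree V E w"
proof -
  have "{u, v} \<subseteq> nbhd V E w"
    using assms u_in v_in adj_sym unfolding nbhd_def by auto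
  then have "card {u, v} \<le> degree V E w"
    unfolding degree_def by (intro card_mono finite_nbhd finite_V)
  with u_neq_v show ?thesis by simp
qed

lemma local_cc_add_edge_other:
  assumes "w \<noteq> u" "w \<noteq> v"
  shows "local_cc V (add_edge E u v) w
    = local_cc V E w + (if w \<in> common then 1 / real (degree V E w choose 2) else 0)"
proof -
  have nbhd_eq: "nbhd V (add_edge E u v) w = nbhd V E w"
    using assms by (rule nbhd_add_edge_other)
  have "induced_edges (add_edge E u v) (nbhd V E w)
      = induced_edges E (nbhd V E w) + (if w \<in> common then 1 else 0)"
  proof (cases "w \<in> common")
    case True
    then have "u \<in> nbhd V E w" "v \<in> nbhd V E w"
      using u_in v_in adj_sym unfolding nbhd_def by auto
    then have "induced_edges (add_edge E u v) (nbhd V E w) = Suc (induced_edges E (nbhd V E w))"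
      by (intro induced_edges_add_edge_inside finite_nbhd finite_V u_neq_v not_adj not_adj_vu)
    with True show ?thesis by simp
  next
    case False
    then have "\<not> (u \<in> nbhd V E w \<and> v \<in> nbhd V E w)"
      using adj_sym adj_in(1) unfolding nbhd_def by blast
    with False show ?thesis
      by (simp add: induced_edges_eq_card edges_within_add_edge_outside)
  qed
  then show ?thesis
    unfolding local_cc_eq_div degree_def nbhd_eq by (simp add: add_divide_distrib)
qed

lemma local_cc_add_edge_endpoint:
  "local_cc V (add_edge E u v) u
    = local_cc V E u + endpoint_gain (degree V E u) (induced_edges E (nbhd V E u)) (card common)"
proof -
  have nbhd_eq: "nbhd V (add_edge E u v) u = insert v (nbhd V E u)"
    using v_in u_neq_v by (rule nbhd_add_edge_endpoint)
  have v_notin: "v \<notin> nbhd V E u" and u_notin: "u \<notin> insert v (nbhd V E u)"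
    using not_adj irrefl u_neq_v unfolding nbhd_def by auto
  have "degree V (add_edge E u v) u = Suc (degree V E u)"
    unfolding degree_def nbhd_eq using v_notin finite_nbhd[OF finite_V] by simp
  moreover have "induced_edges (add_edge E u v) (insert v (nbhd V E u))
      = induced_edges E (insert v (nbhd V E u))"
    using u_notin by (simp add: induced_edges_eq_card edges_within_add_edge_outside)
  moreover have "\<dots> = induced_edges E (nbhd V E u) + card {x \<in> nbhd V E u. E v x}"
    using v_notin finite_nbhd[OF finite_V] adj_sym irrefl by (intro induced_edges_insert)
  moreover have "{x \<in> nbhd V E u. E v x} = common"
    using adj_in unfolding nbhd_def by auto
  ultimately show ?thesis
    unfolding local_cc_eq_div[of V "add_edge E u v"] local_cc_eq_div[of V E] endpoint_gain_def
    by (simp add: nbhd_eq)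
qed

definition gain :: real where
  "gain = (\<Sum>w\<in>common. 1 / real (degree V E w choose 2))
    + endpoint_gain (degree V E u) (induced_edges E (nbhd V E u)) (card common)
    + endpoint_gain (degree V E v) (induced_edges E (nbhd V E v)) (card common)"

lemma sum_local_cc_add_edge:
  "(\<Sum>w\<in>V. local_cc V (add_edge E u v) w) = (\<Sum>w\<in>V. local_cc V E w) + gain"
proof -
  have V_eq: "V = insert u (insert v rest)" using u_in v_in by auto
  have split: "sum g V = g u + g v + sum g rest" for g :: "'a \<Rightarrow> real"
    by (subst V_eq) (use finite_V u_neq_v in \<open>simp add: add.assoc\<close>)
  have "(\<Sum>w\<in>rest. local_cc V (add_edge E u v) w)
      = (\<Sum>w\<in>rest. local_cc V E w + (if w \<in> common then 1 / real (degree V E w choose 2) else 0))"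
    by (rule sum.cong) (simp_all add: local_cc_add_edge_other)
  also have "\<dots> = (\<Sum>w\<in>rest. local_cc V E w) + (\<Sum>w\<in>rest \<inter> common. 1 / real (degree V E w choose 2))"
    using finite_V by (simp add: sum.distrib sum.inter_restrict)
  also have "rest \<inter> common = common"
    using common_subset_rest by blast
  finally show ?thesis
    unfolding split[of "local_cc V (add_edge E u v)"] split[of "local_cc V E"] gain_def
      local_cc_add_edge_endpoint
      nonadjacent_pair.local_cc_add_edge_endpoint[OF swap, unfolded add_edge_commute[of E v u] Int_commute[of "nbhd V E v"]]
    by simp
qed

lemma finite_common: "finite common"
  using finite_nbhd[OF finite_V] by blast

lemma card_common_le: "card common \<le> card V - 2"
  using card_mono[OF _ common_subset_rest] finite_V card_rest by simp

lemma card_common_le_degree: "card common \<le> degree V E u" "card common \<le> degree V E v"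
  unfolding degree_def by (intro card_mono finite_nbhd finite_V; blast)+

lemma induced_edges_nbhd_le: "induced_edges E (nbhd V E w) \<le> degree V E w choose 2"
  unfolding degree_def by (intro induced_edges_le_choose_two finite_nbhd finite_V irrefl)

lemma sum_common_le:
  shows "(\<Sum>w\<in>common. 1 / real (degree V E w choose 2)) \<le> real (card common)"
    and "(\<Sum>w\<in>common. 1 / real (degree V E w choose 2)) = real (card common)
      \<Longrightarrow> w \<in> common \<Longrightarrow> degree V E w = 2"
proof -
  have le_one: "1 / real (degree V E w choose 2) \<le> 1" if "w \<in> common" for w
    using inverse_choose_two_le_one(1)[OF degree_common_ge_two[OF that]] .
  show "(\<Sum>w\<in>common. 1 / real (degree V E w choose 2)) \<le> real (card common)"
  proof -
    have "(\<Sum>w\<in>common. 1 / real (degree V E w choose 2)) \<le> (\<Sum>w\<in>common. 1)"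
      by (rule sum_mono) (rule le_one)
    then show ?thesis by simp
  qed
  assume eq: "(\<Sum>w\<in>common. 1 / real (degree V E w choose 2)) = real (card common)"
    and w: "w \<in> common"
  show "degree V E w = 2"
  proof (rule ccontr)
    assume "degree V E w \<noteq> 2"
    then have "(\<Sum>w\<in>common. 1 / real (degree V E w choose 2)) < (\<Sum>w\<in>common. 1)"
      using le_one w inverse_choose_two_le_one(2)[OF degree_common_ge_two[OF w]]
      by (intro sum_strict_mono_ex1 finite_common) auto
    with eq show False by simp
  qed
qed

lemma gain_nonpos_if_no_common: "common = {} \<Longrightarrow> gain \<le> 0"
  using endpoint_gain_le[OF induced_edges_nbhd_le, of _ 0] by (simp add: gain_def add_nonpos_nonpos)

lemma gain_le_common:
  assumes "common \<noteq> {}"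
  shows "gain \<le> real (card common) + 4 / (real (card common) + 1)"
    and "gain = real (card common) + 4 / (real (card common) + 1) \<Longrightarrow>
      degree V E u = card common \<and> degree V E v = card common \<and> (\<forall>w\<in>common. degree V E w = 2)"
proof -
  have k: "1 \<le> card common" using assms finite_common by (simp add: Suc_le_eq card_gt_0_iff)
  note bound_u = endpoint_gain_le_two_div[OF induced_edges_nbhd_le k card_common_le_degree(1)]
  note bound_v = endpoint_gain_le_two_div[OF induced_edges_nbhd_le k card_common_le_degree(2)]
  have four: "4 / (real (card common) + 1) = 2 / (real (card common) + 1) + 2 / (real (card common) + 1)"
    by (simp add: add_divide_distrib[symmetric])
  show "gain \<le> real (card common) + 4 / (real (card common) + 1)"
    using sum_common_le(1) bound_u(1) bound_v(1) four unfolding gain_def by linarith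
  assume "gain = real (card common) + 4 / (real (card common) + 1)"
  then have "(\<Sum>w\<in>common. 1 / real (degree V E w choose 2)) = real (card common)"
    and "endpoint_gain (degree V E u) (induced_edges E (nbhd V E u)) (card common) = 2 / (real (card common) + 1)"
    and "endpoint_gain (degree V E v) (induced_edges E (nbhd V E v)) (card common) = 2 / (real (card common) + 1)"
    using sum_common_le(1) bound_u(1) bound_v(1) four unfolding gain_def by linarith+
  then show "degree V E u = card common \<and> degree V E v = card common \<and> (\<forall>w\<in>common. degree V E w = 2)"
    using sum_common_le(2) bound_u(2) bound_v(2) by blast
qed

lemma two_le_card: "2 \<le> card V"
  using card_mono[OF finite_V, of "{u, v}"] u_in v_in u_neq_v by simp

lemma max_gain_pos: "0 < max_gain"
proof -
  have "0 < 4 / (real (card V) - 1)" "0 \<le> real (card V) - 2" using two_le_card by auto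
  then show ?thesis by linarith
qed

lemma gain_le: "gain \<le> max_gain"
proof (cases "common = {}")
  case True
  with gain_nonpos_if_no_common max_gain_pos show ?thesis by fastforce
next
  case False
  have "1 \<le> real (card common)" "real (card common) \<le> real (card V) - 2"
    using False finite_common card_common_le two_le_card by (auto simp: Suc_le_eq card_gt_0_iff)
  then have "real (card common) + 4 / (real (card common) + 1)
      \<le> real (card V) - 2 + 4 / (real (card V) - 2 + 1)"
    by (rule plus_four_div_succ_le(1))
  also have "real (card V) - 2 + 1 = real (card V) - 1" by simp
  finally show ?thesis using gain_le_common(1)[OF False] by linarith
qed

lemma nbhds_of_gain_eq:
  assumes eq: "gain = max_gain"
  shows "nbhd V E u = rest \<and> nbhd V E v = rest \<and> (\<forall>w\<in>rest. nbhd V E w = {u, v})"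
proof -
  have "common \<noteq> {}"
    using gain_nonpos_if_no_common max_gain_pos eq by fastforce
  then have k: "1 \<le> real (card common)" "real (card common) \<le> real (card V) - 2"
    using finite_common card_common_le two_le_card by (auto simp: Suc_le_eq card_gt_0_iff)
  have n: "real (card V) - 2 + 1 = real (card V) - 1" by simp
  have tight: "gain = real (card common) + 4 / (real (card common) + 1)"
    using gain_le_common(1)[OF \<open>common \<noteq> {}\<close>] plus_four_div_succ_le(1)[OF k] eq
    unfolding n by linarith
  have "card common = card V - 2"
  proof (rule ccontr)
    assume "card common \<noteq> card V - 2"
    then have "real (card common) < real (card V) - 2" using k two_le_card by linarith
    with plus_four_div_succ_le(2)[OF k] tight eq show False unfolding n by linarith
  qed
  then have common_eq: "common = rest"
    using card_subset_eq[OF _ common_subset_rest] finite_V card_rest by simp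
  have deg: "degree V E u = card common" "degree V E v = card common" "\<forall>w\<in>common. degree V E w = 2"
    using gain_le_common(2)[OF \<open>common \<noteq> {}\<close> tight] by auto
  have "common = nbhd V E u" "common = nbhd V E v"
    using deg(1,2) unfolding degree_def
    by (intro card_subset_eq finite_nbhd finite_V Int_lower1 Int_lower2; simp)+
  moreover have "nbhd V E w = {u, v}" if "w \<in> rest" for w
  proof -
    have "{u, v} \<subseteq> nbhd V E w"
      using that u_in v_in adj_sym unfolding common_eq[symmetric] nbhd_def by auto
    moreover have "card (nbhd V E w) = card {u, v}"
      using deg(3) that u_neq_v unfolding common_eq degree_def by simp
    ultimately have "{u, v} = nbhd V E w" by (intro card_subset_eq finite_nbhd finite_V) simp_all
    then show ?thesis by simp
  qed
  ultimately show ?thesis unfolding common_eq by blast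
qed

lemma gain_eq_of_nbhds:
  assumes "3 \<le> card V"
    and nbhd_u: "nbhd V E u = rest" and nbhd_v: "nbhd V E v = rest"
    and nbhd_rest: "\<forall>w\<in>rest. nbhd V E w = {u, v}"
  shows "gain = max_gain"
proof -
  have k: "card common = card V - 2" "1 \<le> card common"
    using assms(1) card_rest unfolding nbhd_u nbhd_v by simp_all
  have "\<not> E x y" if "x \<in> rest" "y \<in> rest" for x y
    using nbhd_rest that unfolding nbhd_def by blast
  then have "edges_within E rest = {}"
    unfolding edges_within_def by blast
  then have no_edges: "induced_edges E rest = 0"
    by (simp add: induced_edges_eq_card)
  have "(\<Sum>w\<in>common. 1 / real (degree V E w choose 2)) = real (card common)"
    using nbhd_rest u_neq_v unfolding nbhd_u nbhd_v degree_def by (simp add: numeral_2_eq_2)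
  moreover have "degree V E u = card common" "degree V E v = card common"
    unfolding degree_def nbhd_u nbhd_v by simp_all
  ultimately have "gain = real (card common) + 2 / (real (card common) + 1) + 2 / (real (card common) + 1)"
    unfolding gain_def endpoint_gain_empty_nbhd[OF k(2), symmetric] by (simp add: nbhd_u nbhd_v no_edges)
  also have "\<dots> = max_gain"
    using k assms(1) by (simp add: add_divide_distrib[symmetric] of_nat_diff)
  finally show ?thesis .
qed

lemma K2_rest_iff_nbhds:
  "is_K2_rest V E \<and> degree V E u = card V - 2 \<and> degree V E v = card V - 2
    \<longleftrightarrow> nbhd V E u = rest \<and> nbhd V E v = rest \<and> (\<forall>w\<in>rest. nbhd V E w = {u, v})"
proof
  assume "is_K2_rest V E \<and> degree V E u = card V - 2 \<and> degree V E v = card V - 2"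
  then obtain A B where parts: "A \<inter> B = {}" "A \<union> B = V" "card A = 2" "card B = card V - 2"
    and adj: "\<forall>x\<in>V. \<forall>y\<in>V. E x y \<longleftrightarrow> (x \<in> A \<and> y \<in> B) \<or> (x \<in> B \<and> y \<in> A)"
    and deg_u: "degree V E u = card V - 2"
    unfolding is_K2_rest_def by blast
  have fin: "finite A" "finite B" using parts(2) finite_V by (auto intro: finite_subset)
  have in_B: "x \<in> B \<longleftrightarrow> x \<notin> A" if "x \<in> V" for x
    using parts(1,2) that by blast
  have adj_A: "E x y \<longleftrightarrow> (x \<in> A \<longleftrightarrow> y \<notin> A)" if "x \<in> V" "y \<in> V" for x y
    using adj that in_B by auto
  have same_part: "u \<in> A \<longleftrightarrow> v \<in> A"
    using adj_A[OF u_in v_in] not_adj by auto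
  have "{u, v} = A \<or> {u, v} = B"
  proof (cases "u \<in> A")
    case True
    with same_part have "{u, v} \<subseteq> A" by simp
    then show ?thesis using card_subset_eq[OF fin(1)] parts(3) u_neq_v by simp
  next
    case False
    with same_part have uv_B: "{u, v} \<subseteq> B" using in_B u_in v_in by blast
    have "nbhd V E u = A"
      unfolding nbhd_def using adj_A u_in False parts(2) by blast
    then have "card B = 2" using deg_u parts(3,4) unfolding degree_def by simp
    then show ?thesis using card_subset_eq[OF fin(2) uv_B] u_neq_v by simp
  qed
  then have "E x y \<longleftrightarrow> (x \<in> {u, v} \<longleftrightarrow> y \<notin> {u, v})" if "x \<in> V" "y \<in> V" for x y
    using adj_A[OF that] in_B that by blast
  then show "nbhd V E u = rest \<and> nbhd V E v = rest \<and> (\<forall>w\<in>rest. nbhd V E w = {u, v})"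
    using u_in v_in by (auto simp: nbhd_def)
next
  assume nbhds: "nbhd V E u = rest \<and> nbhd V E v = rest \<and> (\<forall>w\<in>rest. nbhd V E w = {u, v})"
  have "is_K2_rest V E"
    unfolding is_K2_rest_def
  proof (rule exI[of _ "{u, v}"], rule exI[of _ rest], intro conjI ballI)
    fix x y assume "x \<in> V" "y \<in> V"
    moreover have "E x y \<longleftrightarrow> y \<in> nbhd V E x" using \<open>y \<in> V\<close> unfolding nbhd_def by simp
    ultimately show "E x y \<longleftrightarrow> (x \<in> {u, v} \<and> y \<in> rest) \<or> (x \<in> rest \<and> y \<in> {u, v})"
      using nbhds by (cases "x \<in> {u, v}") auto
  qed (use u_in v_in u_neq_v card_rest in auto)
  then show "is_K2_rest V E \<and> degree V E u = card V - 2 \<and> degree V E v = card V - 2"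
    unfolding degree_def using nbhds card_rest by simp
qed

end

theorem theorem4:
  fixes V :: "'a set" and E :: "'a \<Rightarrow> 'a \<Rightarrow> bool" and u v :: 'a
  assumes "simple_graph V E"
    and "card V \<ge> 3"
    and "u \<in> V" "v \<in> V" "u \<noteq> v" "\<not> E u v"
  defines "n \<equiv> real (card V)"
  shows "cc V (add_edge E u v) \<le> cc V E + (1 - 2 / n + 4 / (n * (n - 1)))
     \<and> (cc V (add_edge E u v) = cc V E + (1 - 2 / n + 4 / (n * (n - 1)))
        \<longleftrightarrow> is_K2_rest V E \<and> degree V E u = card V - 2 \<and> degree V E v = card V - 2)"
proof -
  interpret nonadjacent_pair V E u v
    using assms(1,3-6) by unfold_locales
  have n: "3 \<le> n" using assms(2) unfolding n_def by simp
  have cc_eq: "cc V (add_edge E u v) = cc V E + gain / n"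
    unfolding cc_def sum_local_cc_add_edge n_def by (simp add: add_divide_distrib)
  have bound_eq: "1 - 2 / n + 4 / (n * (n - 1)) = (n - 2 + 4 / (n - 1)) / n"
    using n by (simp add: field_simps)
  have "gain \<le> n - 2 + 4 / (n - 1)"
    using gain_le unfolding n_def .
  moreover have "gain = n - 2 + 4 / (n - 1)
      \<longleftrightarrow> is_K2_rest V E \<and> degree V E u = card V - 2 \<and> degree V E v = card V - 2"
    using K2_rest_iff_nbhds nbhds_of_gain_eq gain_eq_of_nbhds[OF assms(2)] unfolding n_def by blast
  ultimately show ?thesis
    unfolding cc_eq bound_eq using n by (simp add: divide_right_mono)
qed

end
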